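(* Let $r\ge2$ be an integer and $\psi\in C_p(\mathbb{R})$. Then for every $n\in\mathbb{N}_0$, $k\in\{0,1,\dots,r^n-1\}$ and $y\in(0,1)$, $$\Delta_{n,k}(y;U_\psi)=\sum_{j=0}^{n-1} r^j\,\Delta_{n-j,k}(y;\psi)-\frac{2r^n}{y(1-y)}\,U_\psi(y),$$ where for $n=0$ the sum is interpreted as $0$.
   Context: $C_p(\mathbb{R})$ denotes the set of all continuous functions $f:\mathbb{R}\to\mathbb{R}$ periodic with period $1$ with $f(0)=0$; $\mathbb{N}_0=\mathbb{N}\cup\{0\}$. For $\psi\in C_p(\mathbb{R})$, $U_\psi(x)=\sum_{j=0}^\infty r^{-j}\psi(r^jx)$, $x\in\mathbb{R}$ (then $U_\psi\in C_p(\mathbb{R})$). For $f\in C_p(\mathbb{R})$ and $(n,k,y)\in\mathbb{N}_0\times\mathbb{Z}\times(0,1)$: $\delta^+_{n,k}(y;f)=\dfrac{f(\frac{k+1}{r^n})-f(\frac{k+y}{r^n})}{\frac{1-y}{r^n}}$, $\delta^-_{n,k}(y;f)=\dfrac{f(\frac{k+y}{r^n})-f(\frac{k}{r^n})}{\frac{y}{r^n}}$, $\Delta_{n,k}(y;f)=2r^n\big(\delta^+_{n,k}(y;f)-\delta^-_{n,k}(y;f)\big)$. *)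

theory Defs
  imports "HOL-Analysis.Analysis"
begin

definition Cp :: "(real \<Rightarrow> real) set" where
  "Cp = {f. continuous_on UNIV f \<and> (\<forall>x. f (x + 1) = f x) \<and> f 0 = 0}"

definition U :: "nat \<Rightarrow> (real \<Rightarrow> real) \<Rightarrow> real \<Rightarrow> real" where
  "U r \<psi> x = (\<Sum>j. \<psi> (real r ^ j * x) / real r ^ j)"

definition delta_plus :: "nat \<Rightarrow> nat \<Rightarrow> int \<Rightarrow> real \<Rightarrow> (real \<Rightarrow> real) \<Rightarrow> real" where
  "delta_plus r n k y f =
     (f ((real_of_int k + 1) / real r ^ n) - f ((real_of_int k + y) / real r ^ n)) / ((1 - y) / real r ^ n)"

definition delta_minus :: "nat \<Rightarrow> nat \<Rightarrow> int \<Rightarrow> real \<Rightarrow> (real \<Rightarrow> real) \<Rightarrow> real" where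
  "delta_minus r n k y f =
     (f ((real_of_int k + y) / real r ^ n) - f (real_of_int k / real r ^ n)) / (y / real r ^ n)"

definition Delta :: "nat \<Rightarrow> nat \<Rightarrow> int \<Rightarrow> real \<Rightarrow> (real \<Rightarrow> real) \<Rightarrow> real" where
  "Delta r n k y f = 2 * real r ^ n * (delta_plus r n k y f - delta_minus r n k y f)"

end

theory Submission
  imports Defs
begin

text \<open>
  Splitting the series after \<open>n\<close> terms gives the functional equation
  \<open>U(x) = (\<Sum>j<n. \<psi>(r^j x) / r^j) + U(r^n x) / r^n\<close>. The operator \<open>Delta r n k y\<close>
  is linear in the function, and precomposing with \<open>x \<mapsto> r^j x\<close> turns it into
  \<open>r^(2j) * Delta r (n - j) k y\<close>; this produces the sum. The tail contributes
  \<open>r^n * Delta r 0 k y U\<close>, which only sees \<open>U\<close> at \<open>k\<close>, \<open>k + y\<close> and \<open>k + 1\<close>, so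
  by 1-periodicity and \<open>U(0) = 0\<close> it equals \<open>-2 r^n U(y) / (y (1 - y))\<close>.
\<close>

lemma Cp_periodic:
  assumes "\<psi> \<in> Cp"
  shows "\<psi> (x + of_int m) = \<psi> x"
proof -
  have shift: "\<psi> (t + 1) = \<psi> t" for t
    using assms unfolding Cp_def by blast
  show ?thesis
  proof (induction m rule: int_induct[where k = 0])
    case (step1 i)
    have "x + of_int (i + 1) = (x + of_int i) + 1"
      by simp
    then show ?case
      using shift step1.IH by metis
  next
    case (step2 i)
    have "x + of_int i = (x + of_int (i - 1)) + 1"
      by simp
    then show ?case
      using shift step2.IH by metis
  qed simp
qed

lemma Cp_bounded:
  assumes "\<psi> \<in> Cp"
  obtains B where "\<And>x. \<bar>\<psi> x\<bar> \<le> B"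
proof -
  have "continuous_on {0..1} \<psi>"
    using assms continuous_on_subset unfolding Cp_def by blast
  then have "bounded (\<psi> ` {0..1})"
    by (intro compact_imp_bounded compact_continuous_image) auto
  then obtain B where B: "\<forall>z\<in>{0..1}. \<bar>\<psi> z\<bar> \<le> B"
    unfolding bounded_iff by auto
  have "\<bar>\<psi> x\<bar> \<le> B" for x
  proof -
    have "\<psi> x = \<psi> (frac x + of_int \<lfloor>x\<rfloor>)"
      by (simp add: frac_def)
    also have "\<dots> = \<psi> (frac x)"
      by (rule Cp_periodic[OF assms])
    finally show ?thesis
      using B frac_lt_1[of x] frac_ge_0[of x] by simp
  qed
  then show ?thesis
    using that by blast
qed

lemma summable_U_series:
  assumes "\<psi> \<in> Cp" and "1 < r"
  shows "summable (\<lambda>j. \<psi> (real r ^ j * x) / real r ^ j)"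
proof -
  obtain B where B: "\<And>x. \<bar>\<psi> x\<bar> \<le> B"
    using Cp_bounded[OF assms(1)] by blast
  have "summable (\<lambda>j. B * (1 / real r) ^ j)"
    using assms(2) by (intro summable_mult summable_geometric) auto
  moreover have "norm (\<psi> (real r ^ j * x) / real r ^ j) \<le> B * (1 / real r) ^ j" for j
  proof -
    have "norm (\<psi> (real r ^ j * x) / real r ^ j) = \<bar>\<psi> (real r ^ j * x)\<bar> / real r ^ j"
      by (simp add: abs_div)
    also have "\<dots> \<le> B / real r ^ j"
      using B assms(2) by (simp add: divide_right_mono)
    finally show ?thesis
      by (simp add: power_one_over)
  qed
  ultimately show ?thesis
    by (rule summable_comparison_test')
qed

lemma U_unfold:
  assumes "\<psi> \<in> Cp" and "1 < r"
  shows "U r \<psi> x = (\<Sum>j<n. \<psi> (real r ^ j * x) / real r ^ j) + U r \<psi> (real r ^ n * x) / real r ^ n"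
proof -
  let ?f = "\<lambda>j. \<psi> (real r ^ j * x) / real r ^ j"
  have "(\<lambda>j. ?f (j + n)) = (\<lambda>j. \<psi> (real r ^ j * (real r ^ n * x)) / real r ^ j / real r ^ n)"
    by (simp add: power_add mult.assoc)
  then have "(\<Sum>j. ?f (j + n)) = U r \<psi> (real r ^ n * x) / real r ^ n"
    unfolding U_def using suminf_divide[OF summable_U_series[OF assms]] by simp
  then show ?thesis
    unfolding U_def using suminf_split_initial_segment[OF summable_U_series[OF assms], of x n]
    by simp
qed

lemma U_periodic:
  assumes "\<psi> \<in> Cp"
  shows "U r \<psi> (x + of_int m) = U r \<psi> x"
proof -
  have "\<psi> (real r ^ j * (x + of_int m)) = \<psi> (real r ^ j * x)" for j
    using Cp_periodic[OF assms, of "real r ^ j * x" "int r ^ j * m"]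
    by (simp add: distrib_left)
  then show ?thesis
    unfolding U_def by simp
qed

lemma U_0:
  assumes "\<psi> \<in> Cp"
  shows "U r \<psi> 0 = 0"
  using assms unfolding U_def Cp_def by simp

lemma Delta_eq:
  "Delta r n k y f = 2 * real r ^ n *
     (real r ^ n / (1 - y) * (f ((of_int k + 1) / real r ^ n) - f ((of_int k + y) / real r ^ n))
      - real r ^ n / y * (f ((of_int k + y) / real r ^ n) - f (of_int k / real r ^ n)))"
  unfolding Delta_def delta_plus_def delta_minus_def by (simp add: ac_simps)

lemma Delta_add:
  "Delta r n k y (\<lambda>x. f x + g x) = Delta r n k y f + Delta r n k y g"
  unfolding Delta_eq by (simp add: algebra_simps)

lemma Delta_sum:
  "Delta r n k y (\<lambda>x. \<Sum>j\<in>A. f j x) = (\<Sum>j\<in>A. Delta r n k y (f j))"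
  unfolding Delta_eq by (simp add: sum_subtractf sum_distrib_left[symmetric] sum_divide_distrib[symmetric])

lemma Delta_divide:
  "Delta r n k y (\<lambda>x. f x / c) = Delta r n k y f / c"
proof -
  have "Delta r n k y (\<lambda>x. inverse c * f x) = inverse c * Delta r n k y f"
    unfolding Delta_eq by (simp add: algebra_simps)
  then show ?thesis
    by (simp add: divide_inverse_commute)
qed

lemma Delta_rescale:
  assumes "0 < r" and "j \<le> n"
  shows "Delta r n k y (\<lambda>x. f (real r ^ j * x)) = (real r ^ j)\<^sup>2 * Delta r (n - j) k y f"
proof -
  have split: "real r ^ n = real r ^ j * real r ^ (n - j)"
    using assms(2) by (simp flip: power_add)
  have points: "real r ^ j * (a / real r ^ n) = a / real r ^ (n - j)" for a
    using assms(1) unfolding split by simp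
  show ?thesis
    unfolding Delta_eq points unfolding split by (simp add: power2_eq_square algebra_simps)
qed

lemma Delta_0_periodic:
  assumes periodic: "\<And>x m. f (x + of_int m) = f x" and "f 0 = 0"
    and "y \<noteq> 0" and "y \<noteq> 1"
  shows "Delta r 0 k y f = - (2 / (y * (1 - y)) * f y)"
proof -
  have "f (of_int k + 1) = 0" "f (of_int k) = 0" "f (of_int k + y) = f y"
    using periodic[of 1 k] periodic[of 0 1] periodic[of 0 k] periodic[of y k] \<open>f 0 = 0\<close>
    by (simp_all add: add.commute)
  then show ?thesis
    unfolding Delta_eq using assms(3,4) by (simp add: field_simps)
qed

theorem theorem3p1:
  fixes r n :: nat and k :: int and y :: real and \<psi> :: "real \<Rightarrow> real"
  assumes "r \<ge> 2" and "\<psi> \<in> Cp"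
    and "0 \<le> k" and "k < int r ^ n"
    and "0 < y" and "y < 1"
  shows "Delta r n k y (U r \<psi>) =
           (\<Sum>j<n. real r ^ j * Delta r (n - j) k y \<psi>)
           - 2 * real r ^ n / (y * (1 - y)) * U r \<psi> y"
proof -
  have r: "1 < r" "0 < r"
    using assms(1) by auto
  have "U r \<psi> = (\<lambda>x. (\<Sum>j<n. \<psi> (real r ^ j * x) / real r ^ j) + U r \<psi> (real r ^ n * x) / real r ^ n)"
    using U_unfold[OF assms(2) r(1)] by blast
  then have "Delta r n k y (U r \<psi>) =
      Delta r n k y (\<lambda>x. (\<Sum>j<n. \<psi> (real r ^ j * x) / real r ^ j) + U r \<psi> (real r ^ n * x) / real r ^ n)"
    by (rule arg_cong)
  also have "\<dots> = (\<Sum>j<n. Delta r n k y (\<lambda>x. \<psi> (real r ^ j * x)) / real r ^ j)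
      + Delta r n k y (\<lambda>x. U r \<psi> (real r ^ n * x)) / real r ^ n"
    by (simp only: Delta_add Delta_sum Delta_divide)
  also have "\<dots> = (\<Sum>j<n. real r ^ j * Delta r (n - j) k y \<psi>) + real r ^ n * Delta r 0 k y (U r \<psi>)"
    using r(2) by (simp add: Delta_rescale power2_eq_square)
  also have "\<dots> = (\<Sum>j<n. real r ^ j * Delta r (n - j) k y \<psi>)
           - 2 * real r ^ n / (y * (1 - y)) * U r \<psi> y"
    using assms(5,6) by (simp add: Delta_0_periodic U_periodic[OF assms(2)] U_0[OF assms(2)])
  finally show ?thesis .
qed

end
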